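(* Let $\langle W,\varphi,(Y,\mathbb S,\sigma)\rangle$ be a monotone one-dimensional cocycle, $(X,\mathbb S_+,\pi)$ its skew-product dynamical system, $h=\mathrm{pr}_2$, and $\tau\in\mathbb S_+$, $\tau>0$. Suppose $x_0\in X$ has precompact semi-trajectory $\{\pi(t,x_0):t\in\mathbb S_+\}$ and $y_0:=h(x_0)$ is asymptotically $\tau$-periodic, i.e. there is a $\tau$-periodic point $q\in Y$ with $\lim_{t\to+\infty}\rho(\sigma(t,y_0),\sigma(t,q))=0$. Then $\tilde\omega_{x_0}=\omega_{x_0}\cap X_q$, where $X_q=h^{-1}(q)$.
   Context: $\mathbb S=\mathbb R$ or $\mathbb Z$, $\mathbb S_+=\{t\in\mathbb S:t\ge0\}$. $(Y,\mathbb S,\sigma)$ is a two-sided dynamical system on a complete metric space $Y$ (continuous $\sigma$, $\sigma(0,y)=y$, $\sigma(t+s,y)=\sigma(t,\sigma(s,y))$); $y$ is $\tau$-periodic if $\sigma(\tau,y)=y$. $W\subseteq\mathbb R$ is an interval. A cocycle over $\sigma$ with fibre $W$ is a continuous $\varphi:\mathbb S_+\times W\times Y\to W$ with $\varphi(0,u,y)=u$ and $\varphi(t+s,u,y)=\varphi(t,\varphi(s,u,y),\sigma(s,y))$; it is monotone if $u_1\le u_2$ implies $\varphi(t,u_1,y)\le\varphi(t,u_2,y)$ for all $t\in\mathbb S_+$, $y\in Y$. The skew-product system is $X=W\times Y$, $\pi(t,(u,y))=(\varphi(t,u,y),\sigma(t,y))$, $h(u,y)=y$. $\omega_{x}$ is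 the set of limits of $\pi(t_k,x)$ with $t_k\in\mathbb S_+$, $t_k\to+\infty$; $\tilde\omega_{x}$ is the set of limits of $\pi(k_n\tau,x)$ with $k_n\in\mathbb Z_+$, $k_n\to\infty$ (the $\omega$-limit set in the discretization $\tilde\pi(k,x)=\pi(k\tau,x)$). *)

theory Defs
  imports "HOL-Analysis.Analysis"
begin

definition time_set :: "real set \<Rightarrow> bool" where
  "time_set T \<longleftrightarrow> T = \<real> \<or> T = \<int>"

definition nonneg_times :: "real set \<Rightarrow> real set" where
  "nonneg_times T = {t \<in> T. t \<ge> 0}"

definition dyn_system :: "real set \<Rightarrow> (real \<Rightarrow> 'y::metric_space \<Rightarrow> 'y) \<Rightarrow> bool" where
  "dyn_system T \<sigma> \<longleftrightarrow>
     continuous_on (T \<times> UNIV) (\<lambda>(t, y). \<sigma> t y) \<and>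
     (\<forall>y. \<sigma> 0 y = y) \<and>
     (\<forall>t\<in>T. \<forall>s\<in>T. \<forall>y. \<sigma> (t + s) y = \<sigma> t (\<sigma> s y))"

definition cocycle :: "real set \<Rightarrow> real set \<Rightarrow> (real \<Rightarrow> real \<Rightarrow> 'y::metric_space \<Rightarrow> real)
     \<Rightarrow> (real \<Rightarrow> 'y \<Rightarrow> 'y) \<Rightarrow> bool" where
  "cocycle T W \<phi> \<sigma> \<longleftrightarrow>
     continuous_on (nonneg_times T \<times> W \<times> UNIV) (\<lambda>(t, u, y). \<phi> t u y) \<and>
     (\<forall>t\<in>nonneg_times T. \<forall>u\<in>W. \<forall>y. \<phi> t u y \<in> W) \<and>
     (\<forall>u\<in>W. \<forall>y. \<phi> 0 u y = u) \<and>
     (\<forall>t\<in>nonneg_times T. \<forall>s\<in>nonneg_times T. \<forall>u\<in>W. \<forall>y.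
        \<phi> (t + s) u y = \<phi> t (\<phi> s u y) (\<sigma> s y))"

definition monotone_cocycle :: "real set \<Rightarrow> real set \<Rightarrow> (real \<Rightarrow> real \<Rightarrow> 'y \<Rightarrow> real) \<Rightarrow> bool" where
  "monotone_cocycle T W \<phi> \<longleftrightarrow>
     (\<forall>u1\<in>W. \<forall>u2\<in>W. u1 \<le> u2 \<longrightarrow> (\<forall>t\<in>nonneg_times T. \<forall>y. \<phi> t u1 y \<le> \<phi> t u2 y))"

definition skew_product :: "(real \<Rightarrow> real \<Rightarrow> 'y \<Rightarrow> real) \<Rightarrow> (real \<Rightarrow> 'y \<Rightarrow> 'y)
     \<Rightarrow> real \<Rightarrow> real \<times> 'y \<Rightarrow> real \<times> 'y" where
  "skew_product \<phi> \<sigma> t x = (\<phi> t (fst x) (snd x), \<sigma> t (snd x))"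

definition omega_limit :: "real set \<Rightarrow> (real \<Rightarrow> 'x::topological_space \<Rightarrow> 'x) \<Rightarrow> 'x \<Rightarrow> 'x set" where
  "omega_limit T \<pi> x = {p. \<exists>tk::nat \<Rightarrow> real. (\<forall>k. tk k \<in> nonneg_times T) \<and>
      filterlim tk at_top sequentially \<and> (\<lambda>k. \<pi> (tk k) x) \<longlonglongrightarrow> p}"

definition discrete_omega_limit :: "real \<Rightarrow> (real \<Rightarrow> 'x::topological_space \<Rightarrow> 'x) \<Rightarrow> 'x \<Rightarrow> 'x set" where
  "discrete_omega_limit \<tau> \<pi> x = {p. \<exists>kn::nat \<Rightarrow> nat.
      filterlim kn at_top sequentially \<and> (\<lambda>n. \<pi> (real (kn n) * \<tau>) x) \<longlonglongrightarrow> p}"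

end

theory Submission
  imports Defs "HOL-Analysis.Kronecker_Approximation_Theorem"
begin

text \<open>Write a time \<open>t\<^sub>k \<rightarrow> \<infinity>\<close> as \<open>r\<^sub>k + n\<^sub>k \<tau>\<close> with \<open>0 \<le> r\<^sub>k < \<tau>\<close>. By compactness, along a
  subsequence \<open>r\<^sub>k \<rightarrow> s\<close> and \<open>\<pi>(n\<^sub>k \<tau>, x\<^sub>0) \<rightarrow> p' = (v, q)\<close>, a point of \<open>\<tilde>\<omega>\<^sub>x\<^sub>0\<close>, and
  \<open>\<pi>(t\<^sub>k, x\<^sub>0) \<rightarrow> \<pi>(s, p')\<close>. Since \<open>\<sigma>(n\<tau>, y\<^sub>0) \<rightarrow> q\<close>, the fibre maps of the recursion
  \<open>u(n + 1) = \<phi>(\<tau>, u(n), \<sigma>(n\<tau>, y\<^sub>0))\<close> converge to the monotone period map \<open>\<phi>(\<tau>, \<cdot>, q)\<close>, and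
  monotonicity forces every limit point of the recursion, in particular \<open>v\<close>, to be fixed by it.
  If the limit lies over \<open>q\<close>, then \<open>\<sigma>(s, q) = q\<close> as well; the monotone map \<open>\<phi>(s, \<cdot>, q)\<close> then has
  iterates at \<open>v\<close> returning arbitrarily close to \<open>v\<close> (Dirichlet approximation of multiples of
  \<open>s\<close> by multiples of \<open>\<tau>\<close>), so it fixes \<open>v\<close> and \<open>\<pi>(s, p') = p'\<close>.\<close>

lemma Reals_eq_UNIV: "(\<real> :: real set) = UNIV"
  using Reals_of_real[where 'a=real] by (auto simp: of_real_def)

lemma nonneg_times_iff [simp]: "t \<in> nonneg_times T \<longleftrightarrow> t \<in> T \<and> 0 \<le> t"
  by (simp add: nonneg_times_def)

lemma time_set_zero: "time_set T \<Longrightarrow> 0 \<in> T"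
  and time_set_add: "time_set T \<Longrightarrow> a \<in> T \<Longrightarrow> b \<in> T \<Longrightarrow> a + b \<in> T"
  and time_set_diff: "time_set T \<Longrightarrow> a \<in> T \<Longrightarrow> b \<in> T \<Longrightarrow> a - b \<in> T"
  and time_set_of_nat_mult: "time_set T \<Longrightarrow> a \<in> T \<Longrightarrow> of_nat n * a \<in> T"
  and time_set_closed: "time_set T \<Longrightarrow> closed T"
  unfolding time_set_def by (auto simp: Reals_eq_UNIV)

lemma dyn_system_zero: "dyn_system T \<sigma> \<Longrightarrow> \<sigma> 0 y = y"
  and dyn_system_add: "dyn_system T \<sigma> \<Longrightarrow> t \<in> T \<Longrightarrow> s \<in> T \<Longrightarrow> \<sigma> (t + s) y = \<sigma> t (\<sigma> s y)"
  and dyn_system_continuous_on: "dyn_system T \<sigma> \<Longrightarrow> continuous_on (T \<times> UNIV) (\<lambda>(t, y). \<sigma> t y)"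
  unfolding dyn_system_def by blast+

lemma cocycle_zero: "cocycle T W \<phi> \<sigma> \<Longrightarrow> u \<in> W \<Longrightarrow> \<phi> 0 u y = u"
  and cocycle_in_fibre: "cocycle T W \<phi> \<sigma> \<Longrightarrow> t \<in> nonneg_times T \<Longrightarrow> u \<in> W \<Longrightarrow> \<phi> t u y \<in> W"
  and cocycle_add: "cocycle T W \<phi> \<sigma> \<Longrightarrow> t \<in> nonneg_times T \<Longrightarrow> s \<in> nonneg_times T \<Longrightarrow> u \<in> W
      \<Longrightarrow> \<phi> (t + s) u y = \<phi> t (\<phi> s u y) (\<sigma> s y)"
  and cocycle_continuous_on:
    "cocycle T W \<phi> \<sigma> \<Longrightarrow> continuous_on (nonneg_times T \<times> W \<times> UNIV) (\<lambda>(t, u, y). \<phi> t u y)"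
  unfolding cocycle_def by blast+

lemma monotone_cocycleD:
  "monotone_cocycle T W \<phi> \<Longrightarrow> u1 \<in> W \<Longrightarrow> u2 \<in> W \<Longrightarrow> u1 \<le> u2 \<Longrightarrow> t \<in> nonneg_times T
    \<Longrightarrow> \<phi> t u1 y \<le> \<phi> t u2 y"
  unfolding monotone_cocycle_def by blast

lemma time_set_floor_remainder:
  assumes "time_set T" "\<tau> \<in> T" "\<tau> > 0" "t \<in> nonneg_times T"
  shows "t - real (nat \<lfloor>t / \<tau>\<rfloor>) * \<tau> \<in> nonneg_times T"
    and "t - real (nat \<lfloor>t / \<tau>\<rfloor>) * \<tau> < \<tau>"
proof -
  define n where "n = nat \<lfloor>t / \<tau>\<rfloor>"
  have "real n = of_int \<lfloor>t / \<tau>\<rfloor>"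
    using assms(3,4) by (simp add: n_def)
  moreover have "of_int \<lfloor>t / \<tau>\<rfloor> * \<tau> \<le> t" "t < (of_int \<lfloor>t / \<tau>\<rfloor> + 1) * \<tau>"
    using of_int_floor_le[of "t / \<tau>"] real_of_int_floor_add_one_gt[of "t / \<tau>"]
    unfolding pos_le_divide_eq[OF assms(3)] pos_divide_less_eq[OF assms(3)] by simp_all
  ultimately have "0 \<le> t - real n * \<tau>" "t - real n * \<tau> < \<tau>"
    by (simp_all add: distrib_right)
  moreover have "t - real n * \<tau> \<in> T"
    using assms by (intro time_set_diff time_set_of_nat_mult) auto
  ultimately show "t - real (nat \<lfloor>t / \<tau>\<rfloor>) * \<tau> \<in> nonneg_times T"
    and "t - real (nat \<lfloor>t / \<tau>\<rfloor>) * \<tau> < \<tau>"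
    by (simp_all add: n_def)
qed

lemma filterlim_floor_div_at_top:
  fixes \<tau> :: real
  assumes "\<tau> > 0" "filterlim t at_top sequentially"
  shows "filterlim (\<lambda>k. nat \<lfloor>t k / \<tau>\<rfloor>) at_top sequentially"
proof -
  have "filterlim (\<lambda>k. t k * (1 / \<tau>)) at_top sequentially"
    using assms by (intro filterlim_at_top_mult_tendsto_pos[OF tendsto_const]) auto
  then show ?thesis
    by (auto intro: filterlim_compose[OF filterlim_nat_sequentially]
        filterlim_compose[OF filterlim_floor_sequentially])
qed

lemma filterlim_of_nat_mult_at_top:
  fixes \<tau> :: real
  assumes "\<tau> > 0" "filterlim n at_top sequentially"
  shows "filterlim (\<lambda>k. real (n k) * \<tau>) at_top sequentially"
  using assms by (intro filterlim_at_top_mult_tendsto_pos[OF tendsto_const]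
      filterlim_compose[OF filterlim_real_sequentially])

lemma dyn_system_periodic:
  assumes "dyn_system T \<sigma>" "time_set T" "\<tau> \<in> T" "\<sigma> \<tau> q = q"
  shows "\<sigma> (real n * \<tau>) q = q"
proof (induction n)
  case 0
  then show ?case using dyn_system_zero[OF assms(1)] by simp
next
  case (Suc n)
  have "\<sigma> (real n * \<tau> + \<tau>) q = \<sigma> (real n * \<tau>) (\<sigma> \<tau> q)"
    using dyn_system_add assms(1-3) time_set_of_nat_mult by blast
  then show ?case using Suc assms(4) by (simp add: algebra_simps)
qed

lemma cocycle_tendsto:
  assumes "cocycle T W \<phi> \<sigma>" "t \<longlonglongrightarrow> s" "u \<longlonglongrightarrow> v" "y \<longlonglongrightarrow> z"
    and "\<And>k. t k \<in> nonneg_times T" "\<And>k. u k \<in> W" "s \<in> nonneg_times T" "v \<in> W"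
  shows "(\<lambda>k. \<phi> (t k) (u k) (y k)) \<longlonglongrightarrow> \<phi> s v z"
proof -
  have "(\<lambda>k. (t k, u k, y k)) \<longlonglongrightarrow> (s, v, z)"
    by (intro tendsto_Pair assms(2-4))
  from continuous_on_tendsto_compose[OF cocycle_continuous_on[OF assms(1)] this] show ?thesis
    using assms(5-8) by (simp only: prod.case mem_Times_iff fst_conv snd_conv UNIV_I simp_thms
        always_eventually)
qed

lemma dyn_system_tendsto:
  assumes "dyn_system T \<sigma>" "t \<longlonglongrightarrow> s" "y \<longlonglongrightarrow> z" "\<And>k. t k \<in> T" "s \<in> T"
  shows "(\<lambda>k. \<sigma> (t k) (y k)) \<longlonglongrightarrow> \<sigma> s z"
proof -
  have "(\<lambda>k. (t k, y k)) \<longlonglongrightarrow> (s, z)"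
    by (intro tendsto_Pair assms(2,3))
  from continuous_on_tendsto_compose[OF dyn_system_continuous_on[OF assms(1)] this] show ?thesis
    using assms(4,5) by (simp only: prod.case mem_Times_iff fst_conv snd_conv UNIV_I simp_thms
        always_eventually)
qed

lemma skew_product_tendsto:
  assumes "dyn_system T \<sigma>" "cocycle T W \<phi> \<sigma>"
    and "t \<longlonglongrightarrow> s" "x \<longlonglongrightarrow> p" "\<And>k. t k \<in> nonneg_times T" "\<And>k. fst (x k) \<in> W"
    and "s \<in> nonneg_times T" "fst p \<in> W"
  shows "(\<lambda>k. skew_product \<phi> \<sigma> (t k) (x k)) \<longlonglongrightarrow> skew_product \<phi> \<sigma> s p"
  unfolding skew_product_def using assms
  by (intro tendsto_Pair cocycle_tendsto[OF assms(2)] dyn_system_tendsto[OF assms(1)]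
      tendsto_fst tendsto_snd) auto

lemma skew_product_add:
  assumes "dyn_system T \<sigma>" "cocycle T W \<phi> \<sigma>"
    and "s \<in> nonneg_times T" "t \<in> nonneg_times T" "fst x \<in> W"
  shows "skew_product \<phi> \<sigma> (s + t) x = skew_product \<phi> \<sigma> s (skew_product \<phi> \<sigma> t x)"
  using assms cocycle_add[OF assms(2)] dyn_system_add[OF assms(1)] by (simp add: skew_product_def)

lemma funpow_mono_on:
  assumes "mono_on W g" "g ` W \<subseteq> W" "x \<in> W" "y \<in> W" "x \<le> y"
  shows "(g ^^ k) x \<le> (g ^^ k) y \<and> (g ^^ k) x \<in> W \<and> (g ^^ k) y \<in> W"
  using assms by (induction k) (auto dest: mono_onD)

text \<open>The orbit of a monotone map is monotone, so it stays on the far side of \<open>g v\<close> from \<open>v\<close>;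
  recurrence then squeezes \<open>g v\<close> onto \<open>v\<close>.\<close>

lemma recurrent_point_of_mono_on_fixed:
  fixes g :: "real \<Rightarrow> real"
  assumes mono: "mono_on W g" and maps: "g ` W \<subseteq> W" and "v \<in> W"
    and recurrent: "\<And>e. e > 0 \<Longrightarrow> \<exists>k. \<bar>(g ^^ Suc k) v - v\<bar> < e"
  shows "g v = v"
proof -
  have gv: "g v \<in> W" using assms by blast
  show ?thesis
  proof (cases "v \<le> g v")
    case True
    then have "(g ^^ k) v \<le> (g ^^ Suc k) v" for k
      using funpow_mono_on[OF mono maps \<open>v \<in> W\<close> gv, of k] by (simp only: funpow_Suc_right o_apply)
    then have upper: "g v \<le> (g ^^ Suc k) v" for k
      using lift_Suc_mono_le[of "\<lambda>k. (g ^^ k) v" 1 "Suc k"] by simp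
    have "g v \<le> v"
    proof (rule field_le_epsilon)
      fix e :: real
      assume "e > 0"
      then obtain k where "\<bar>(g ^^ Suc k) v - v\<bar> < e"
        using recurrent by blast
      with upper[of k] show "g v \<le> v + e"
        by linarith
    qed
    with True show ?thesis by simp
  next
    case False
    then have "(g ^^ Suc k) v \<le> (g ^^ k) v" for k
      using funpow_mono_on[OF mono maps gv \<open>v \<in> W\<close>, of k] by (simp only: funpow_Suc_right o_apply)
    then have lower: "(g ^^ Suc k) v \<le> g v" for k
      using lift_Suc_antimono_le[of "\<lambda>k. (g ^^ k) v" 1 "Suc k"] by simp
    have "v \<le> g v"
    proof (rule field_le_epsilon)
      fix e :: real
      assume "e > 0"
      then obtain k where "\<bar>(g ^^ Suc k) v - v\<bar> < e"
        using recurrent by blast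
      with lower[of k] show "v \<le> g v + e"
        by linarith
    qed
    with False show ?thesis by simp
  qed
qed

lemma nat_multiple_near_nat_multiple:
  fixes s \<tau> \<delta> :: real
  assumes "s > 0" "\<tau> > 0" "\<delta> > 0"
  obtains k h :: nat where "k > 0" "\<bar>real k * s - real h * \<tau>\<bar> < \<delta>"
proof -
  obtain N :: nat where N: "\<tau> / \<delta> < real N"
    using reals_Archimedean2 by blast
  moreover have "\<tau> / \<delta> > 0"
    using assms by simp
  ultimately have "N > 0"
    by linarith
  then have "\<tau> / real N < \<delta>"
    using N assms by (simp add: field_simps)
  obtain h k :: int where k: "0 < k" and hk: "\<bar>of_int k * (s / \<tau>) - of_int h\<bar> < 1 / real N"
    using Dirichlet_approx[OF \<open>N > 0\<close>] by blast
  have "\<bar>of_int k * s - of_int h * \<tau>\<bar> = \<tau> * \<bar>of_int k * (s / \<tau>) - of_int h\<bar>"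
    using assms(2) by (simp add: abs_mult[symmetric] field_simps)
  also have "\<dots> < \<delta>"
    using mult_strict_left_mono[OF hk assms(2)] \<open>\<tau> / real N < \<delta>\<close> by simp
  finally have close: "\<bar>of_int k * s - of_int h * \<tau>\<bar> < \<delta>" .
  have "of_int k * (s / \<tau>) > 0" "1 / real N \<le> 1"
    using k assms \<open>N > 0\<close> by simp_all
  then have "h \<ge> 0"
    using hk by linarith
  then show ?thesis
    using that[of "nat k" "nat h"] k close by simp
qed

lemma monotone_recursion_trapped:
  fixes u :: "nat \<Rightarrow> real"
  assumes u: "\<And>n. u n \<in> W" "\<And>n. u (Suc n) = F n (u n)"
    and mono: "\<And>n. mono_on W (F n)"
    and c: "c \<in> W" "c \<le> d" "\<And>n. n \<ge> N \<Longrightarrow> F n c > d"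
    and start: "N \<le> n0" "c \<le> u n0"
  shows "u (Suc (n0 + m)) > d"
proof (induction m)
  case 0
  have "F n0 c \<le> F n0 (u n0)"
    using mono_onD[OF mono c(1) u(1) start(2)] .
  then show ?case
    using c(3)[OF start(1)] u(2) by simp
next
  case (Suc m)
  have "c \<le> u (Suc (n0 + m))"
    using Suc.IH c(2) by linarith
  then have "F (Suc (n0 + m)) c \<le> u (Suc (Suc (n0 + m)))"
    unfolding u(2)[of "Suc (n0 + m)"] by (rule mono_onD[OF mono c(1) u(1)])
  moreover have "F (Suc (n0 + m)) c > d"
    using c(3) start(1) by simp
  ultimately show ?case
    by simp
qed

lemma is_interval_approach_from_below:
  fixes v :: real
  assumes "is_interval W" "v \<in> W" "\<delta> > 0"
  obtains c where "c \<in> W" "c \<le> v" "v - c < \<delta>" "c < v \<or> (\<forall>w\<in>W. c \<le> w)"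
proof (cases "\<exists>w\<in>W. w < v")
  case True
  then obtain w where "w \<in> W" "w < v" by blast
  moreover have "w \<le> max w (v - \<delta> / 2)" "max w (v - \<delta> / 2) \<le> v"
    using \<open>w < v\<close> assms(3) by auto
  ultimately have "max w (v - \<delta> / 2) \<in> W"
    using assms(1,2) unfolding is_interval_1 by blast
  with that \<open>w < v\<close> assms(3) show ?thesis by auto
next
  case False
  with that[of v] assms show ?thesis by (auto simp: not_less)
qed

text \<open>If \<open>P v > v\<close>, pick \<open>c \<le> v\<close> close to \<open>v\<close> with \<open>P c > d > v\<close>. For late \<open>n\<close> the maps \<open>F n\<close>
  push \<open>c\<close> above \<open>d\<close>, so once the orbit is above \<open>c\<close> at a late time it is trapped above \<open>d\<close>,
  contradicting \<open>u (kn j) \<rightarrow> v\<close>. The alternative \<open>c = min W\<close> covers \<open>v\<close> at the left end of \<open>W\<close>.\<close>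

lemma monotone_recursion_limit_point_le:
  fixes u :: "nat \<Rightarrow> real"
  assumes W: "is_interval W" and u: "\<And>n. u n \<in> W" "\<And>n. u (Suc n) = F n (u n)"
    and mono: "\<And>n. mono_on W (F n)"
    and F_tendsto: "\<And>c. c \<in> W \<Longrightarrow> (\<lambda>n. F n c) \<longlonglongrightarrow> P c"
    and P: "continuous_on W P" and "v \<in> W"
    and kn: "filterlim kn at_top sequentially" and lim: "(\<lambda>j. u (kn j)) \<longlonglongrightarrow> v"
  shows "P v \<le> v"
proof (rule ccontr)
  assume "\<not> P v \<le> v"
  define d where "d = (v + P v) / 2"
  have "v < d" "d < P v"
    using \<open>\<not> P v \<le> v\<close> unfolding d_def by auto
  obtain \<delta> where "\<delta> > 0" and \<delta>: "\<And>c. c \<in> W \<Longrightarrow> \<bar>c - v\<bar> < \<delta> \<Longrightarrow> \<bar>P c - P v\<bar> < P v - d"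
    using P \<open>v \<in> W\<close> \<open>d < P v\<close> unfolding continuous_on_iff dist_real_def
    by (metis diff_gt_0_iff_gt)
  obtain c where c: "c \<in> W" "c \<le> v" "v - c < \<delta>" "c < v \<or> (\<forall>w\<in>W. c \<le> w)"
    using is_interval_approach_from_below[OF W \<open>v \<in> W\<close> \<open>\<delta> > 0\<close>] .
  have "P c > d"
    using \<delta>[OF c(1)] c(2,3) by (simp add: abs_le_iff abs_less_iff)
  then obtain N where N: "\<And>n. n \<ge> N \<Longrightarrow> F n c > d"
    using order_tendstoD(1)[OF F_tendsto[OF c(1)]] unfolding eventually_sequentially by blast
  have "\<forall>\<^sub>F j in sequentially. c \<le> u (kn j)"
    using c(4)
  proof
    assume "c < v"
    from order_tendstoD(1)[OF lim this] show ?thesis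
      by (rule eventually_mono) simp
  qed (use u(1) in simp)
  moreover have "\<forall>\<^sub>F j in sequentially. N \<le> kn j"
    using kn by (simp add: filterlim_at_top)
  ultimately obtain j0 where "c \<le> u (kn j0)" "N \<le> kn j0"
    unfolding eventually_sequentially by (metis le_sup_iff order_refl)
  then have trapped: "u (Suc (kn j0 + m)) > d" for m
    using monotone_recursion_trapped[of u W F c d N "kn j0", OF u mono c(1) _ N] \<open>v < d\<close> c(2)
    by simp
  have "\<forall>\<^sub>F j in sequentially. u (kn j) < d"
    using order_tendstoD(2)[OF lim \<open>v < d\<close>] .
  moreover have "\<forall>\<^sub>F j in sequentially. Suc (kn j0) \<le> kn j"
    using kn by (simp add: filterlim_at_top)
  ultimately obtain j where "u (kn j) < d" "Suc (kn j0) \<le> kn j"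
    unfolding eventually_sequentially by (metis le_sup_iff order_refl)
  moreover have "u (kn j) > d"
    using trapped[of "kn j - Suc (kn j0)"] \<open>Suc (kn j0) \<le> kn j\<close> by simp
  ultimately show False
    by simp
qed

lemma monotone_recursion_limit_point_fixed:
  fixes u :: "nat \<Rightarrow> real"
  assumes W: "is_interval W" and u: "\<And>n. u n \<in> W" "\<And>n. u (Suc n) = F n (u n)"
    and mono: "\<And>n. mono_on W (F n)"
    and F_tendsto: "\<And>c. c \<in> W \<Longrightarrow> (\<lambda>n. F n c) \<longlonglongrightarrow> P c"
    and P: "continuous_on W P" and "v \<in> W"
    and kn: "filterlim kn at_top sequentially" and lim: "(\<lambda>j. u (kn j)) \<longlonglongrightarrow> v"
  shows "P v = v"
proof -
  have "P v \<le> v"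
    by (rule monotone_recursion_limit_point_le[OF assms])
  moreover have "- P (- (- v)) \<le> - v" \<comment> \<open>the same bound for the reflected recursion\<close>
  proof (rule monotone_recursion_limit_point_le[where W="uminus ` W" and u="\<lambda>n. - u n"
        and F="\<lambda>n c. - F n (- c)" and kn=kn])
    show "mono_on (uminus ` W) (\<lambda>c. - F n (- c))" for n
      using mono_onD[OF mono] by (auto intro!: mono_onI)
    show "continuous_on (uminus ` W) (\<lambda>c. - P (- c))"
      by (intro continuous_on_minus continuous_on_compose2[OF P] continuous_intros) auto
  qed (use assms in \<open>auto intro: tendsto_minus\<close>)
  ultimately show ?thesis
    by simp
qed

lemma cocycle_iterate:
  assumes "cocycle T W \<phi> \<sigma>" "time_set T" "s \<in> nonneg_times T" "\<sigma> s q = q" "v \<in> W"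
  shows "((\<lambda>u. \<phi> s u q) ^^ k) v = \<phi> (real k * s) v q"
  using assms(5)
proof (induction k arbitrary: v)
  case 0
  then show ?case using cocycle_zero[OF assms(1)] by simp
next
  case (Suc k)
  have "real k * s \<in> nonneg_times T"
    using time_set_of_nat_mult[OF assms(2)] assms(3) by simp
  have "\<phi> s v q \<in> W"
    using cocycle_in_fibre[OF assms(1,3) Suc.prems] .
  have "((\<lambda>u. \<phi> s u q) ^^ Suc k) v = ((\<lambda>u. \<phi> s u q) ^^ k) (\<phi> s v q)"
    by (simp only: funpow_Suc_right o_apply)
  also have "\<dots> = \<phi> (real k * s) (\<phi> s v q) (\<sigma> s q)"
    using Suc.IH[OF \<open>\<phi> s v q \<in> W\<close>] assms(4) by simp
  also have "\<dots> = \<phi> (real k * s + s) v q"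
    using cocycle_add[OF assms(1) \<open>real k * s \<in> nonneg_times T\<close> assms(3) Suc.prems] by simp
  finally show ?case
    by (simp add: algebra_simps)
qed

lemma cocycle_periodic_point:
  assumes "cocycle T W \<phi> \<sigma>" "dyn_system T \<sigma>" "time_set T" "\<tau> \<in> nonneg_times T"
    and "\<sigma> \<tau> q = q" "v \<in> W" "\<phi> \<tau> v q = v" "t \<in> nonneg_times T"
  shows "\<phi> (t + real n * \<tau>) v q = \<phi> t v q"
proof -
  have "((\<lambda>u. \<phi> \<tau> u q) ^^ n) v = v"
    using assms(7) by (induction n) simp_all
  then have "\<phi> (real n * \<tau>) v q = v"
    using cocycle_iterate[OF assms(1,3,4,5,6)] by simp
  moreover have "real n * \<tau> \<in> nonneg_times T"
    using assms(3,4) time_set_of_nat_mult by auto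
  ultimately show ?thesis
    using cocycle_add[OF assms(1,8) _ assms(6)] dyn_system_periodic[OF assms(2,3)] assms(4,5) by auto
qed

text \<open>By Dirichlet, some \<open>k s\<close> is within \<open>\<delta>\<close> of a multiple of \<open>\<tau>\<close>; by \<open>\<tau>\<close>-periodicity
  \<open>\<phi>(k s, v, q)\<close> is then close to \<open>\<phi>(0, v, q)\<close> or to \<open>\<phi>(\<tau>, v, q)\<close>, both equal to \<open>v\<close>.\<close>

lemma cocycle_periodic_point_recurrent:
  assumes coc: "cocycle T W \<phi> \<sigma>" and dyn: "dyn_system T \<sigma>" and T: "time_set T"
    and "\<tau> \<in> T" "\<tau> > 0" "\<sigma> \<tau> q = q" "v \<in> W" "\<phi> \<tau> v q = v"
    and s: "s \<in> nonneg_times T" "s > 0" and "e > 0"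
  shows "\<exists>k. \<bar>\<phi> (real (Suc k) * s) v q - v\<bar> < e"
proof -
  have \<tau>: "\<tau> \<in> nonneg_times T" using assms by simp
  have v0: "\<phi> 0 v q = v" using cocycle_zero[OF coc \<open>v \<in> W\<close>] .
  have per: "\<phi> (t + real n * \<tau>) v q = \<phi> t v q" if "t \<in> nonneg_times T" for t n
    using cocycle_periodic_point[OF coc dyn T \<tau>] assms that by blast
  have "continuous_on (nonneg_times T) (\<lambda>t. (\<lambda>(t, u, y). \<phi> t u y) (t, v, q))"
    using \<open>v \<in> W\<close> by (intro continuous_on_compose2[OF cocycle_continuous_on[OF coc]])
        (auto intro!: continuous_intros)
  then have "continuous_on (nonneg_times T) (\<lambda>t. \<phi> t v q)"
    by simp
  then obtain d0 d\<tau> where "d0 > 0" "d\<tau> > 0"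
    and d0: "\<And>t. t \<in> nonneg_times T \<Longrightarrow> \<bar>t\<bar> < d0 \<Longrightarrow> \<bar>\<phi> t v q - v\<bar> < e"
    and d\<tau>: "\<And>t. t \<in> nonneg_times T \<Longrightarrow> \<bar>t - \<tau>\<bar> < d\<tau> \<Longrightarrow> \<bar>\<phi> t v q - v\<bar> < e"
    using \<open>e > 0\<close> \<tau> time_set_zero[OF T] v0 \<open>\<phi> \<tau> v q = v\<close>
    unfolding continuous_on_iff dist_real_def by (metis nonneg_times_iff order_refl diff_zero)
  obtain k h :: nat where "k > 0" and close: "\<bar>real k * s - real h * \<tau>\<bar> < min (min d0 d\<tau>) \<tau>"
    using nat_multiple_near_nat_multiple[OF s(2) \<open>\<tau> > 0\<close>, of "min (min d0 d\<tau>) \<tau>"]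
      \<open>d0 > 0\<close> \<open>d\<tau> > 0\<close> \<open>\<tau> > 0\<close> by auto
  define r where "r = real k * s - real h * \<tau>"
  have "r \<in> T"
    unfolding r_def using assms by (intro time_set_diff time_set_of_nat_mult) auto
  have "\<bar>\<phi> (real k * s) v q - v\<bar> < e"
  proof (cases "r \<ge> 0")
    case True
    then have "\<phi> (real k * s) v q = \<phi> r v q"
      using per[of r h] \<open>r \<in> T\<close> by (simp add: r_def)
    then show ?thesis
      using d0[of r] True \<open>r \<in> T\<close> close by (simp add: r_def)
  next
    case False
    have "real k * s > 0"
      using \<open>k > 0\<close> s(2) by simp
    with False have "real h * \<tau> > 0"
      unfolding r_def by linarith
    then have "h \<ge> 1"
      by (cases h) auto
    then have "real k * s = (r + \<tau>) + real (h - 1) * \<tau>"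
      by (simp add: r_def of_nat_diff algebra_simps)
    moreover have "r + \<tau> \<in> nonneg_times T"
      using close \<open>r \<in> T\<close> time_set_add[OF T \<open>r \<in> T\<close> \<open>\<tau> \<in> T\<close>] by (auto simp: r_def)
    ultimately have "\<phi> (real k * s) v q = \<phi> (r + \<tau>) v q"
      using per by simp
    moreover have "\<bar>(r + \<tau>) - \<tau>\<bar> < d\<tau>"
      using close by (simp add: r_def)
    ultimately show ?thesis
      using d\<tau>[of "r + \<tau>"] \<open>r + \<tau> \<in> nonneg_times T\<close> by simp
  qed
  then show ?thesis
    using \<open>k > 0\<close> by (metis Suc_pred)
qed

lemma cocycle_periodic_point_fixed:
  assumes coc: "cocycle T W \<phi> \<sigma>" and dyn: "dyn_system T \<sigma>" and mon: "monotone_cocycle T W \<phi>"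
    and T: "time_set T" and "\<tau> \<in> T" "\<tau> > 0" "\<sigma> \<tau> q = q" "v \<in> W" "\<phi> \<tau> v q = v"
    and s: "s \<in> nonneg_times T" "\<sigma> s q = q"
  shows "\<phi> s v q = v"
proof (cases "s = 0")
  case True
  then show ?thesis using cocycle_zero[OF coc \<open>v \<in> W\<close>] by simp
next
  case False
  have "mono_on W (\<lambda>u. \<phi> s u q)"
    using monotone_cocycleD[OF mon _ _ _ s(1)] by (auto intro: mono_onI)
  moreover have "(\<lambda>u. \<phi> s u q) ` W \<subseteq> W"
    using cocycle_in_fibre[OF coc s(1)] by blast
  moreover have "\<exists>k. \<bar>((\<lambda>u. \<phi> s u q) ^^ Suc k) v - v\<bar> < e" if "e > 0" for e
    unfolding cocycle_iterate[OF coc T s \<open>v \<in> W\<close>]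
    using cocycle_periodic_point_recurrent[OF coc dyn T assms(5-9) s(1) _ that] False s(1) by simp
  ultimately show ?thesis
    using recurrent_point_of_mono_on_fixed \<open>v \<in> W\<close> by blast
qed

locale monotone_skew_product =
  fixes T W :: "real set"
    and \<sigma> :: "real \<Rightarrow> 'y::metric_space \<Rightarrow> 'y"
    and \<phi> :: "real \<Rightarrow> real \<Rightarrow> 'y \<Rightarrow> real"
    and \<tau> :: real and x0 :: "real \<times> 'y" and q :: 'y
  assumes time_set: "time_set T"
    and dyn: "dyn_system T \<sigma>"
    and interval: "is_interval W"
    and coc: "cocycle T W \<phi> \<sigma>"
    and mon: "monotone_cocycle T W \<phi>"
    and \<tau>_in: "\<tau> \<in> T" and \<tau>_pos: "\<tau> > 0"
    and x0_in: "x0 \<in> W \<times> UNIV"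
    and compact_orbit: "compact (closure ((\<lambda>t. skew_product \<phi> \<sigma> t x0) ` nonneg_times T))"
    and orbit_in: "closure ((\<lambda>t. skew_product \<phi> \<sigma> t x0) ` nonneg_times T) \<subseteq> W \<times> UNIV"
    and periodic: "\<sigma> \<tau> q = q"
    and asymptotic: "\<forall>\<epsilon>>0. \<exists>L. \<forall>t\<in>T. t \<ge> L \<longrightarrow> dist (\<sigma> t (snd x0)) (\<sigma> t q) < \<epsilon>"
begin

abbreviation \<pi> :: "real \<Rightarrow> real \<times> 'y \<Rightarrow> real \<times> 'y" where
  "\<pi> \<equiv> skew_product \<phi> \<sigma>"

abbreviation orbit_closure :: "(real \<times> 'y) set" where
  "orbit_closure \<equiv> closure ((\<lambda>t. \<pi> t x0) ` nonneg_times T)"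

lemma multiple_nonneg: "real n * \<tau> \<in> nonneg_times T"
  using time_set_of_nat_mult[OF time_set \<tau>_in] \<tau>_pos by simp

lemma orbit_fst_in: "t \<in> nonneg_times T \<Longrightarrow> fst (\<pi> t x0) \<in> W"
  using x0_in cocycle_in_fibre[OF coc] by (auto simp: skew_product_def mem_Times_iff)

lemma base_tendsto_periodic_point:
  assumes "filterlim n at_top sequentially"
  shows "(\<lambda>j. \<sigma> (real (n j) * \<tau>) (snd x0)) \<longlonglongrightarrow> q"
  unfolding tendsto_iff
proof (intro allI impI)
  fix e :: real
  assume "e > 0"
  then obtain L where L: "\<And>t. t \<in> T \<Longrightarrow> t \<ge> L \<Longrightarrow> dist (\<sigma> t (snd x0)) (\<sigma> t q) < e"
    using asymptotic by blast
  have "\<forall>\<^sub>F j in sequentially. L \<le> real (n j) * \<tau>"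
    using filterlim_of_nat_mult_at_top[OF \<tau>_pos assms] by (simp add: filterlim_at_top)
  then show "\<forall>\<^sub>F j in sequentially. dist (\<sigma> (real (n j) * \<tau>) (snd x0)) q < e"
  proof (rule eventually_mono)
    fix j
    assume "L \<le> real (n j) * \<tau>"
    then show "dist (\<sigma> (real (n j) * \<tau>) (snd x0)) q < e"
      using L[of "real (n j) * \<tau>"] multiple_nonneg[of "n j"]
        dyn_system_periodic[OF dyn time_set \<tau>_in periodic, of "n j"] by simp
  qed
qed

lemma discrete_omega_limitE:
  assumes "p \<in> discrete_omega_limit \<tau> \<pi> x0"
  obtains n where "filterlim n at_top sequentially" "(\<lambda>j. \<pi> (real (n j) * \<tau>) x0) \<longlonglongrightarrow> p"
  using assms unfolding discrete_omega_limit_def by blast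

lemma discrete_omega_limit_in_fibre:
  assumes "p \<in> discrete_omega_limit \<tau> \<pi> x0"
  shows "p \<in> W \<times> {q}"
proof -
  obtain n where n: "filterlim n at_top sequentially"
    and lim: "(\<lambda>j. \<pi> (real (n j) * \<tau>) x0) \<longlonglongrightarrow> p"
    using assms by (rule discrete_omega_limitE)
  have "p \<in> orbit_closure"
    unfolding closure_sequential using lim multiple_nonneg
    by (intro exI[of _ "\<lambda>j. \<pi> (real (n j) * \<tau>) x0"]) blast
  then have "fst p \<in> W"
    using orbit_in by (auto simp: mem_Times_iff)
  moreover have "(\<lambda>j. \<sigma> (real (n j) * \<tau>) (snd x0)) \<longlonglongrightarrow> snd p"
    using tendsto_snd[OF lim] by (simp add: skew_product_def)
  then have "snd p = q"
    using base_tendsto_periodic_point[OF n] by (rule LIMSEQ_unique)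
  ultimately show ?thesis
    by (simp add: mem_Times_iff)
qed

lemma discrete_omega_limit_subset: "discrete_omega_limit \<tau> \<pi> x0 \<subseteq> omega_limit T \<pi> x0"
  unfolding omega_limit_def
  using filterlim_of_nat_mult_at_top[OF \<tau>_pos] multiple_nonneg
  by (fastforce elim!: discrete_omega_limitE)

lemma discrete_omega_limit_fixed:
  assumes "(v, q) \<in> discrete_omega_limit \<tau> \<pi> x0"
  shows "\<phi> \<tau> v q = v"
proof -
  obtain n where n: "filterlim n at_top sequentially"
    and lim: "(\<lambda>j. \<pi> (real (n j) * \<tau>) x0) \<longlonglongrightarrow> (v, q)"
    using assms by (rule discrete_omega_limitE)
  define u where "u k = \<phi> (real k * \<tau>) (fst x0) (snd x0)" for k
  define F where "F k c = \<phi> \<tau> c (\<sigma> (real k * \<tau>) (snd x0))" for k c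
  have \<tau>: "\<tau> \<in> nonneg_times T"
    using \<tau>_in \<tau>_pos by simp
  have u_in: "u k \<in> W" for k
    using orbit_fst_in[OF multiple_nonneg] by (simp add: u_def skew_product_def)
  have u_Suc: "u (Suc k) = F k (u k)" for k
    using cocycle_add[OF coc \<tau> multiple_nonneg, of "fst x0" k "snd x0"] x0_in
    by (simp add: u_def F_def mem_Times_iff algebra_simps)
  have F_mono: "mono_on W (F k)" for k
    using monotone_cocycleD[OF mon _ _ _ \<tau>] by (auto simp: F_def intro: mono_onI)
  have F_tendsto: "(\<lambda>k. F k c) \<longlonglongrightarrow> \<phi> \<tau> c q" if "c \<in> W" for c
    unfolding F_def using that \<tau>
    by (intro cocycle_tendsto[OF coc] base_tendsto_periodic_point filterlim_ident) auto
  have "continuous_on W (\<lambda>c. (\<lambda>(t, u, y). \<phi> t u y) (\<tau>, c, q))"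
    using \<tau> by (intro continuous_on_compose2[OF cocycle_continuous_on[OF coc]])
        (auto intro!: continuous_intros)
  then have P_cont: "continuous_on W (\<lambda>c. \<phi> \<tau> c q)"
    by simp
  have u_lim: "(\<lambda>j. u (n j)) \<longlonglongrightarrow> v"
    using tendsto_fst[OF lim] by (simp add: u_def skew_product_def)
  have "v \<in> W"
    using discrete_omega_limit_in_fibre[OF assms] by simp
  show ?thesis
    by (rule monotone_recursion_limit_point_fixed[OF interval u_in u_Suc F_mono F_tendsto P_cont
          \<open>v \<in> W\<close> n u_lim])
qed

lemma remainder_and_orbit_convergent_subseq:
  fixes r :: "nat \<Rightarrow> real" and n :: "nat \<Rightarrow> nat"
  assumes r: "\<And>k. r k \<in> nonneg_times T" "\<And>k. r k < \<tau>"
  obtains l s p' where "strict_mono l" "s \<in> nonneg_times T" "p' \<in> orbit_closure"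
    "(\<lambda>k. r (l k)) \<longlonglongrightarrow> s" "(\<lambda>k. \<pi> (real (n (l k)) * \<tau>) x0) \<longlonglongrightarrow> p'"
proof -
  have "\<pi> (real (n k) * \<tau>) x0 \<in> orbit_closure" for k
    by (intro closure_subset[THEN subsetD] imageI multiple_nonneg)
  then have in_compact: "\<forall>k. (r k, \<pi> (real (n k) * \<tau>) x0) \<in> {0..\<tau>} \<times> orbit_closure"
    using r by (simp add: less_imp_le)
  have "seq_compact ({0..\<tau>} \<times> orbit_closure)"
    by (intro compact_imp_seq_compact compact_Times compact_Icc compact_orbit)
  from seq_compactE[OF this in_compact] obtain sp l where sp: "sp \<in> {0..\<tau>} \<times> orbit_closure"
    and "strict_mono l" and "((\<lambda>k. (r k, \<pi> (real (n k) * \<tau>) x0)) \<circ> l) \<longlonglongrightarrow> sp" .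
  then have lim: "(\<lambda>k. (r (l k), \<pi> (real (n (l k)) * \<tau>) x0)) \<longlonglongrightarrow> sp"
    by (simp add: o_def)
  have r_lim: "(\<lambda>k. r (l k)) \<longlonglongrightarrow> fst sp"
    using tendsto_fst[OF lim] by simp
  then have "fst sp \<in> T"
    using closed_sequentially[OF time_set_closed[OF time_set] _ r_lim] r by simp
  with sp have "fst sp \<in> nonneg_times T" "snd sp \<in> orbit_closure"
    by (simp_all add: mem_Times_iff)
  with \<open>strict_mono l\<close> r_lim tendsto_snd[OF lim] show ?thesis
    using that by simp
qed

lemma omega_limit_shift_of_discrete:
  assumes "p \<in> omega_limit T \<pi> x0"
  obtains s p' where "s \<in> nonneg_times T" "p' \<in> discrete_omega_limit \<tau> \<pi> x0" "p = \<pi> s p'"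
proof -
  obtain t where t: "\<And>k. t k \<in> nonneg_times T" and t_top: "filterlim t at_top sequentially"
    and t_lim: "(\<lambda>k. \<pi> (t k) x0) \<longlonglongrightarrow> p"
    using assms unfolding omega_limit_def by blast
  define n where "n k = nat \<lfloor>t k / \<tau>\<rfloor>" for k
  define r where "r k = t k - real (n k) * \<tau>" for k
  have r: "r k \<in> nonneg_times T" "r k < \<tau>" for k
    unfolding r_def n_def using time_set_floor_remainder[OF time_set \<tau>_in \<tau>_pos t] by auto
  obtain l s p' where "strict_mono l" "s \<in> nonneg_times T" "p' \<in> orbit_closure"
    and r_lim: "(\<lambda>k. r (l k)) \<longlonglongrightarrow> s" and p'_lim: "(\<lambda>k. \<pi> (real (n (l k)) * \<tau>) x0) \<longlonglongrightarrow> p'"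
    using remainder_and_orbit_convergent_subseq[OF r] .
  have "filterlim (\<lambda>k. n (l k)) at_top sequentially"
    unfolding n_def by (intro filterlim_compose[OF filterlim_floor_div_at_top[OF \<tau>_pos t_top]]
        filterlim_subseq \<open>strict_mono l\<close>)
  then have "p' \<in> discrete_omega_limit \<tau> \<pi> x0"
    unfolding discrete_omega_limit_def by (intro CollectI exI[of _ "\<lambda>k. n (l k)"] conjI p'_lim)
  moreover have "\<pi> (t (l k)) x0 = \<pi> (r (l k)) (\<pi> (real (n (l k)) * \<tau>) x0)" for k
    using skew_product_add[OF dyn coc r(1)[of "l k"] multiple_nonneg[of "n (l k)"], of x0] x0_in
    by (simp add: r_def mem_Times_iff)
  moreover have "fst p' \<in> W"
    using \<open>p' \<in> orbit_closure\<close> orbit_in by (auto simp: mem_Times_iff)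
  ultimately have "(\<lambda>k. \<pi> (t (l k)) x0) \<longlonglongrightarrow> \<pi> s p'"
    using skew_product_tendsto[OF dyn coc r_lim p'_lim r(1) orbit_fst_in[OF multiple_nonneg]
        \<open>s \<in> nonneg_times T\<close>] by simp
  then have "p = \<pi> s p'"
    using LIMSEQ_unique LIMSEQ_subseq_LIMSEQ[OF t_lim \<open>strict_mono l\<close>] by (simp add: o_def)
  with \<open>p' \<in> discrete_omega_limit \<tau> \<pi> x0\<close> \<open>s \<in> nonneg_times T\<close> show ?thesis
    using that by blast
qed

theorem discrete_omega_limit_eq: "discrete_omega_limit \<tau> \<pi> x0 = omega_limit T \<pi> x0 \<inter> (W \<times> {q})"
proof
  show "discrete_omega_limit \<tau> \<pi> x0 \<subseteq> omega_limit T \<pi> x0 \<inter> (W \<times> {q})"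
    by (intro Int_greatest discrete_omega_limit_subset subsetI discrete_omega_limit_in_fibre)
next
  show "omega_limit T \<pi> x0 \<inter> (W \<times> {q}) \<subseteq> discrete_omega_limit \<tau> \<pi> x0"
  proof
    fix p
    assume p: "p \<in> omega_limit T \<pi> x0 \<inter> (W \<times> {q})"
    obtain s p' where s: "s \<in> nonneg_times T" and p': "p' \<in> discrete_omega_limit \<tau> \<pi> x0"
      and p_eq: "p = \<pi> s p'"
      using omega_limit_shift_of_discrete[OF IntD1[OF p]] .
    obtain v where v: "p' = (v, q)" "v \<in> W"
      using discrete_omega_limit_in_fibre[OF p'] by (cases p') auto
    have "\<sigma> s q = q"
      using p p_eq v by (simp add: skew_product_def mem_Times_iff)
    then have "\<phi> s v q = v"
      using cocycle_periodic_point_fixed[OF coc dyn mon time_set \<tau>_in \<tau>_pos periodic v(2)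
          discrete_omega_limit_fixed s] p' v by simp
    with p_eq v p' \<open>\<sigma> s q = q\<close> show "p \<in> discrete_omega_limit \<tau> \<pi> x0"
      by (simp add: skew_product_def)
  qed
qed

end

theorem mainTheorem5:
  fixes T W :: "real set"
    and \<sigma> :: "real \<Rightarrow> 'y::complete_space \<Rightarrow> 'y"
    and \<phi> :: "real \<Rightarrow> real \<Rightarrow> 'y \<Rightarrow> real"
    and \<tau> :: real and x0 :: "real \<times> 'y" and q :: 'y
  assumes "time_set T"
    and "dyn_system T \<sigma>"
    and "is_interval W"
    and "cocycle T W \<phi> \<sigma>"
    and "monotone_cocycle T W \<phi>"
    and "\<tau> \<in> T" and "\<tau> > 0"
    and "x0 \<in> W \<times> UNIV"
    and "compact (closure ((\<lambda>t. skew_product \<phi> \<sigma> t x0) ` nonneg_times T))"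
    and "closure ((\<lambda>t. skew_product \<phi> \<sigma> t x0) ` nonneg_times T) \<subseteq> W \<times> UNIV"
    and "\<sigma> \<tau> q = q"
    and "\<forall>\<epsilon>>0. \<exists>L. \<forall>t\<in>T. t \<ge> L \<longrightarrow> dist (\<sigma> t (snd x0)) (\<sigma> t q) < \<epsilon>"
  shows "discrete_omega_limit \<tau> (skew_product \<phi> \<sigma>) x0
           = omega_limit T (skew_product \<phi> \<sigma>) x0 \<inter> (W \<times> {q})"
proof -
  interpret monotone_skew_product T W \<sigma> \<phi> \<tau> x0 q
    using assms by unfold_locales
  show ?thesis
    by (rule discrete_omega_limit_eq)
qed

end
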